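(* Consider the two-route traffic model with affine routing ratios described in the context, and assume that $\phi r_\ell^0\le F_\ell$ for $\ell=1,2$. For $\alpha\in(0,1]$ let $\overline{x}(\alpha)$ be the unique equilibrium of the system with penetration rate $\alpha$. Let $i\in\{1,2\}$ and $j=3-i$. Then $\phi R_i(\overline{x}(\alpha))>F_i$ (unsatisfied demand on route $i$ at equilibrium) if and only if $\phi>F_i(1+E_j/E_i)-E_j(1-2r_i^0)$ and $\alpha>\underline{\alpha}_i:=\dfrac{2E_iE_j(F_i-\phi r_i^0)}{\phi\big(E_iE_j(1-2r_i^0)+\phi E_i-F_i(E_i+E_j)\big)}$.
   Context: Two routes $i=1,2$ connect an origin to a destination, with positive parameters $B_i$ (jam density), $C_i$ (critical density), $F_i$ (capacity), $C_i<B_i$, and constant demand $\phi>0$. Set $v_i=F_i/C_i$ and $E_i=v_iB_i$. The state $x=(x_1,x_2)\in\Omega:=[0,B_1]\times[0,B_2]$ evolves by $\dot x_i=\min\{\phi R_i(x),S_i(x_i)\}-D_i(x_i)$, with $S_i(x_i)=F_i$ if $x_i<C_i$, $S_i(x_i)=\frac{F_i}{B_i-C_i}(B_i-x_i)$ otherwise; $D_i(x_i)=v_ix_i$ if $x_i<C_i$, $D_i(x_i)=F_i$ otherwise. The routing ratios are affine: with penetration rate $\alpha\in(0,1]$ and constants $r_1^0,r_2^0\ge0$, $r_1^0+r_2^0=1$, $R_1(x)=(1-\alpha)r_1^0+\alpha\big(\tfrac12+\tfrac12(\tfrac{x_2}{B_2}-\tfrac{x_1}{B_1})\big)$, $R_2(x)=(1-\alpha)r_2^0+\alpha\big(\tfrac12+\tfrac12(\tfrac{x_1}{B_1}-\tfrac{x_2}{B_2})\big)$.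 Standing assumptions: $\phi<F_1+F_2$; $F_i>(1-\alpha)\phi r_i^0$ for $i=1,2$; $\phi<E_i$ for $i=1,2$. Under these assumptions the system has, for each $\alpha$, a unique equilibrium $\overline{x}(\alpha)\in\Omega$. *)

theory Defs
  imports Complex_Main
begin

text \<open>Two-route model. Route-indexed parameters are functions on nat, used at indices 1 and 2;
  the other route of route i is 3 - i.\<close>

definition vel :: "(nat \<Rightarrow> real) \<Rightarrow> (nat \<Rightarrow> real) \<Rightarrow> nat \<Rightarrow> real" where
  "vel F C i = F i / C i"

definition Ecap :: "(nat \<Rightarrow> real) \<Rightarrow> (nat \<Rightarrow> real) \<Rightarrow> (nat \<Rightarrow> real) \<Rightarrow> nat \<Rightarrow> real" where
  "Ecap B C F i = vel F C i * B i"

definition supply_fn :: "(nat \<Rightarrow> real) \<Rightarrow> (nat \<Rightarrow> real) \<Rightarrow> (nat \<Rightarrow> real) \<Rightarrow> nat \<Rightarrow> real \<Rightarrow> real" where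
  "supply_fn B C F i y = (if y < C i then F i else F i / (B i - C i) * (B i - y))"

definition demand_fn :: "(nat \<Rightarrow> real) \<Rightarrow> (nat \<Rightarrow> real) \<Rightarrow> nat \<Rightarrow> real \<Rightarrow> real" where
  "demand_fn C F i y = (if y < C i then vel F C i * y else F i)"

definition route_ratio :: "(nat \<Rightarrow> real) \<Rightarrow> real \<Rightarrow> (nat \<Rightarrow> real) \<Rightarrow> nat \<Rightarrow> (nat \<Rightarrow> real) \<Rightarrow> real" where
  "route_ratio B \<alpha> r0 i x =
     (1 - \<alpha>) * r0 i + \<alpha> * (1/2 + 1/2 * (x (3 - i) / B (3 - i) - x i / B i))"

definition field_fn :: "(nat \<Rightarrow> real) \<Rightarrow> (nat \<Rightarrow> real) \<Rightarrow> (nat \<Rightarrow> real) \<Rightarrow> real \<Rightarrow> real \<Rightarrow> (nat \<Rightarrow> real)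
     \<Rightarrow> nat \<Rightarrow> (nat \<Rightarrow> real) \<Rightarrow> real" where
  "field_fn B C F \<phi> \<alpha> r0 i x =
     min (\<phi> * route_ratio B \<alpha> r0 i x) (supply_fn B C F i (x i)) - demand_fn C F i (x i)"

definition is_equilibrium :: "(nat \<Rightarrow> real) \<Rightarrow> (nat \<Rightarrow> real) \<Rightarrow> (nat \<Rightarrow> real) \<Rightarrow> real \<Rightarrow> real
     \<Rightarrow> (nat \<Rightarrow> real) \<Rightarrow> (nat \<Rightarrow> real) \<Rightarrow> bool" where
  "is_equilibrium B C F \<phi> \<alpha> r0 x \<longleftrightarrow>
     (\<forall>l\<in>{1,2}. 0 \<le> x l \<and> x l \<le> B l \<and> field_fn B C F \<phi> \<alpha> r0 l x = 0)"

end

theory Submission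
  imports Defs
begin

text \<open>At an equilibrium the outflow of each route equals the inflow actually admitted,
  \<open>v\<^sub>l x\<^sub>l = min (\<phi> R\<^sub>l) F\<^sub>l\<close>, so \<open>x\<^sub>l / B\<^sub>l = min (\<phi> R\<^sub>l) F\<^sub>l / E\<^sub>l\<close>. Since \<open>R\<^sub>j = 1 - R\<^sub>i\<close>,
  the routing ratio \<open>R = R\<^sub>i\<close> is then a fixed point of a scalar map which is piecewise affine and
  decreasing in \<open>R\<close>. Comparing it with its value \<open>T\<close> in the regime "route \<open>i\<close> congested, route
  \<open>j\<close> free" shows \<open>\<phi> R > F\<^sub>i \<longleftrightarrow> \<phi> T > F\<^sub>i\<close>, and the latter inequality, being affine in
  \<open>\<alpha>\<close>, unfolds into the two stated conditions.\<close>

lemma outflow_eq_admitted_inflow: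
  assumes "0 < C l" "C l < B l" "0 < F l"
    and balance: "min d (supply_fn B C F l y) = demand_fn C F l y"
  shows "vel F C l * y = min d (F l)"
proof (cases "y < C l")
  case True
  then have "vel F C l * y < F l"
    using assms(1,3) unfolding vel_def by (simp add: field_simps)
  then show ?thesis
    using balance True unfolding supply_fn_def demand_fn_def by (auto simp: min_def)
next
  case False
  then have min_eq: "min d (F l / (B l - C l) * (B l - y)) = F l"
    using balance unfolding supply_fn_def demand_fn_def by simp
  then have "F l \<le> F l / (B l - C l) * (B l - y)"
    by (metis min.cobounded2)
  then have "y = C l"
    using False assms(2,3) by (simp add: field_simps)
  moreover have "F l \<le> d"
    using min_eq by (metis min.cobounded1)
  ultimately show ?thesis
    using assms(1) unfolding vel_def by (simp add: min_absorb2)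
qed

lemma equilibrium_density:
  assumes "is_equilibrium B C F \<phi> \<alpha> r0 x" "l \<in> {1,2}"
    and "0 < C l" "C l < B l" "0 < F l"
  shows "x l / B l = min (\<phi> * route_ratio B \<alpha> r0 l x) (F l) / Ecap B C F l"
proof -
  have "0 < vel F C l"
    using assms(3,5) unfolding vel_def by simp
  then have "x l / B l = vel F C l * x l / Ecap B C F l"
    unfolding Ecap_def by simp
  also have "vel F C l * x l = min (\<phi> * route_ratio B \<alpha> r0 l x) (F l)"
    using assms unfolding is_equilibrium_def field_fn_def
    by (intro outflow_eq_admitted_inflow) auto
  finally show ?thesis .
qed

lemma route_ratio_other:
  assumes "i \<in> {1,2}" "r0 1 + r0 2 = 1"
  shows "route_ratio B \<alpha> r0 (3 - i) x = 1 - route_ratio B \<alpha> r0 i x"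
proof -
  have "\<alpha> = \<alpha> * r0 1 + \<alpha> * r0 2"
    using assms(2) by (simp flip: distrib_left)
  then show ?thesis
    using assms unfolding route_ratio_def by (auto simp: algebra_simps)
qed

text \<open>The value of the routing ratio of route \<open>i\<close> when route \<open>i\<close> runs at capacity
  \<open>F\<^sub>i\<close> and the other route absorbs the remaining flow \<open>\<phi> - F\<^sub>i\<close> in free flow.\<close>

definition congested_ratio :: "real \<Rightarrow> real \<Rightarrow> real \<Rightarrow> real \<Rightarrow> real \<Rightarrow> real \<Rightarrow> real" where
  "congested_ratio \<alpha> r \<phi> Fi Ei Ej = (1 - \<alpha>) * r + \<alpha> / 2 * (1 + (\<phi> - Fi) / Ej - Fi / Ei)"

lemma congested_iff_congested_ratio:
  fixes R r \<phi> \<alpha> Fi Fj Ei Ej :: real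
  assumes "0 < Ei" "0 < Ej" "0 < \<phi>" "0 < \<alpha>" "\<phi> < Fi + Fj"
    and fixed_point:
      "R = (1 - \<alpha>) * r + \<alpha> * (1/2 + 1/2 * (min (\<phi> * (1 - R)) Fj / Ej - min (\<phi> * R) Fi / Ei))"
  shows "\<phi> * R > Fi \<longleftrightarrow> \<phi> * congested_ratio \<alpha> r \<phi> Fi Ei Ej > Fi"
proof -
  define T where "T = congested_ratio \<alpha> r \<phi> Fi Ei Ej"
  have "(1 - \<alpha>) * r + \<alpha> * (1/2 + 1/2 * (min (\<phi> * (1 - R)) Fj / Ej - min (\<phi> * R) Fi / Ei)) - T
      = \<alpha> / 2 * ((min (\<phi> * (1 - R)) Fj - (\<phi> - Fi)) / Ej + (Fi - min (\<phi> * R) Fi) / Ei)"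
    unfolding T_def congested_ratio_def by (simp add: algebra_simps diff_divide_distrib add_divide_distrib)
  then have deviation: "R - T = \<alpha> / 2 *
      ((min (\<phi> * (1 - R)) Fj - (\<phi> - Fi)) / Ej + (Fi - min (\<phi> * R) Fi) / Ei)"
    unfolding fixed_point[symmetric] .
  have "R < T" if "\<phi> * R > Fi"
  proof -
    have "min (\<phi> * (1 - R)) Fj - (\<phi> - Fi) = Fi - \<phi> * R"
      using that \<open>\<phi> < Fi + Fj\<close> by (simp add: algebra_simps min_def)
    then have "R - T = \<alpha> / 2 * ((Fi - \<phi> * R) / Ej)"
      using that deviation by simp
    also have "\<dots> < 0"
      using that assms(2,4) by (simp add: mult_pos_neg divide_neg_pos)
    finally show ?thesis by simp
  qed
  moreover have "T \<le> R" if "\<phi> * R \<le> Fi"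
  proof -
    have "0 \<le> min (\<phi> * (1 - R)) Fj - (\<phi> - Fi)"
      using that \<open>\<phi> < Fi + Fj\<close> by (simp add: algebra_simps)
    moreover have "0 \<le> Fi - min (\<phi> * R) Fi"
      by simp
    ultimately have "0 \<le> \<alpha> / 2 * ((min (\<phi> * (1 - R)) Fj - (\<phi> - Fi)) / Ej + (Fi - min (\<phi> * R) Fi) / Ei)"
      using assms(1,2,4) by simp
    then show ?thesis
      using deviation by simp
  qed
  ultimately show ?thesis
    using \<open>0 < \<phi>\<close> unfolding T_def
    by (meson less_trans mult_strict_left_mono not_le order.trans mult_left_mono less_imp_le)
qed

lemma congested_ratio_threshold:
  fixes r \<phi> \<alpha> Fi Ei Ej :: real
  assumes "0 < Ei" "0 < Ej" "0 < \<phi>" "0 < \<alpha>" "\<phi> * r \<le> Fi"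
  shows "\<phi> * congested_ratio \<alpha> r \<phi> Fi Ei Ej > Fi \<longleftrightarrow>
    \<phi> > Fi * (1 + Ej / Ei) - Ej * (1 - 2 * r) \<and>
    \<alpha> > (2 * Ei * Ej * (Fi - \<phi> * r)) / (\<phi> * (Ei * Ej * (1 - 2 * r) + \<phi> * Ei - Fi * (Ei + Ej)))"
proof -
  define K where "K = Ei * Ej * (1 - 2 * r) + \<phi> * Ei - Fi * (Ei + Ej)"
  have "\<phi> * congested_ratio \<alpha> r \<phi> Fi Ei Ej - Fi = \<alpha> * \<phi> * K / (2 * Ei * Ej) - (Fi - \<phi> * r)"
    unfolding congested_ratio_def K_def using assms(1,2) by (simp add: field_simps)
  then have "\<phi> * congested_ratio \<alpha> r \<phi> Fi Ei Ej > Fi \<longleftrightarrow> Fi - \<phi> * r < \<alpha> * \<phi> * K / (2 * Ei * Ej)"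
    by linarith
  also have "\<dots> \<longleftrightarrow> 2 * Ei * Ej * (Fi - \<phi> * r) < \<alpha> * (\<phi> * K)"
    using assms(1,2) by (simp add: pos_less_divide_eq mult.commute mult.left_commute)
  also have "\<dots> \<longleftrightarrow> K > 0 \<and> \<alpha> > (2 * Ei * Ej * (Fi - \<phi> * r)) / (\<phi> * K)"
  proof (cases "K > 0")
    case True
    then show ?thesis
      using assms(3) by (simp add: pos_divide_less_eq)
  next
    case False
    then have "\<alpha> * (\<phi> * K) \<le> 0"
      using assms(3,4) by (simp add: mult_nonneg_nonpos)
    moreover have "0 \<le> 2 * Ei * Ej * (Fi - \<phi> * r)"
      using assms(1,2,5) by simp
    ultimately show ?thesis
      using False by simp
  qed
  also have "K > 0 \<longleftrightarrow> \<phi> > Fi * (1 + Ej / Ei) - Ej * (1 - 2 * r)"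
  proof -
    have "K = Ei * (\<phi> - (Fi * (1 + Ej / Ei) - Ej * (1 - 2 * r)))"
      unfolding K_def using assms(1) by (simp add: field_simps)
    then show ?thesis
      using assms(1) by (simp add: zero_less_mult_iff)
  qed
  finally show ?thesis
    unfolding K_def .
qed

theorem proposition3:
  fixes B C F r0 x :: "nat \<Rightarrow> real" and \<phi> \<alpha> :: real and i :: nat
  assumes pos: "\<forall>l\<in>{1,2}. 0 < B l \<and> 0 < C l \<and> 0 < F l \<and> C l < B l"
    and phi_pos: "0 < \<phi>"
    and alpha: "0 < \<alpha>" "\<alpha> \<le> 1"
    and r0: "r0 1 \<ge> 0" "r0 2 \<ge> 0" "r0 1 + r0 2 = 1"
    and A1: "\<phi> < F 1 + F 2"
    and A2: "\<forall>l\<in>{1,2}. F l > (1 - \<alpha>) * \<phi> * r0 l"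
    and A3: "\<forall>l\<in>{1,2}. \<phi> < Ecap B C F l"
    and H: "\<forall>l\<in>{1,2}. \<phi> * r0 l \<le> F l"
    and eq: "is_equilibrium B C F \<phi> \<alpha> r0 x"
    and i: "i \<in> {1,2}"
  shows "\<phi> * route_ratio B \<alpha> r0 i x > F i \<longleftrightarrow>
    (let j = 3 - i; Ei = Ecap B C F i; Ej = Ecap B C F j in
      \<phi> > F i * (1 + Ej / Ei) - Ej * (1 - 2 * r0 i) \<and>
      \<alpha> > (2 * Ei * Ej * (F i - \<phi> * r0 i)) /
            (\<phi> * (Ei * Ej * (1 - 2 * r0 i) + \<phi> * Ei - F i * (Ei + Ej))))"
proof -
  define j where "j = 3 - i"
  let ?R = "route_ratio B \<alpha> r0"
  have j: "j \<in> {1,2}" "3 - j = i"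
    using i unfolding j_def by auto
  have density: "x l / B l = min (\<phi> * ?R l x) (F l) / Ecap B C F l" if "l \<in> {1,2}" for l
    using pos eq that by (intro equilibrium_density) auto
  have "?R i x = (1 - \<alpha>) * r0 i + \<alpha> * (1/2 + 1/2 *
      (min (\<phi> * (1 - ?R i x)) (F j) / Ecap B C F j - min (\<phi> * ?R i x) (F i) / Ecap B C F i))"
    using density[OF i] density[OF j(1)] route_ratio_other[OF i r0(3)]
    unfolding route_ratio_def j_def by simp
  moreover have Ecap_pos: "0 < Ecap B C F l" if "l \<in> {1,2}" for l
    using A3 phi_pos that by fastforce
  moreover have "\<phi> < F i + F j"
    using A1 i unfolding j_def by auto
  ultimately have "\<phi> * ?R i x > F i \<longleftrightarrow>
      \<phi> * congested_ratio \<alpha> (r0 i) \<phi> (F i) (Ecap B C F i) (Ecap B C F j) > F i"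
    using i j phi_pos alpha(1) by (intro congested_iff_congested_ratio) auto
  moreover have "\<phi> * r0 i \<le> F i"
    using H i by blast
  ultimately show ?thesis
    using congested_ratio_threshold[OF Ecap_pos[OF i] Ecap_pos[OF j(1)] phi_pos alpha(1)]
    unfolding Let_def j_def[symmetric] by simp
qed

end
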